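(* For $n\ge 0$ let $K_n$ be the complete graph on $n$ vertices ($K_0$ empty). Then $$\sum_{n\ge 0}\mathrm{sa}(K_n;t)\,\frac{x^n}{n!} = e^{tx}\,\operatorname{sech} x.$$
   Context: All graphs are finite, simple and undirected. For a graph $G=(V,E)$ and $V'\subseteq V$, $G|_{V'}$ denotes the induced subgraph on $V'$. The signed a-number $\mathrm{sa}(G)$ is defined recursively: $\mathrm{sa}(G)=1$ if $G$ is the empty graph (no vertices); $\mathrm{sa}(G)=0$ if $G$ has a connected component with an odd number of vertices; otherwise $\mathrm{sa}(G)=-\sum_{V'\subsetneq V}\mathrm{sa}(G|_{V'})$. The signed a-polynomial of $G$ is $\mathrm{sa}(G;t)=\sum_{V'\subseteq V}\mathrm{sa}(G|_{V'})\,t^{|V\setminus V'|}$. *)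

theory Defs
  imports Complex_Main "HOL-Computational_Algebra.Formal_Power_Series"
begin

(* A finite simple graph is given by a finite vertex set V and a symmetric,
   irreflexive edge relation E.  The induced subgraph on V' \<subseteq> V is (V', E)
   (edges are only ever used between vertices of the current vertex set). *)

definition reach :: "('a \<Rightarrow> 'a \<Rightarrow> bool) \<Rightarrow> 'a set \<Rightarrow> 'a \<Rightarrow> 'a \<Rightarrow> bool" where
  "reach E V = (\<lambda>x y. x \<in> V \<and> y \<in> V \<and> E x y)\<^sup>*\<^sup>*"

definition component :: "('a \<Rightarrow> 'a \<Rightarrow> bool) \<Rightarrow> 'a set \<Rightarrow> 'a \<Rightarrow> 'a set" where
  "component E V v = {u \<in> V. reach E V v u}"

definition has_odd_component :: "('a \<Rightarrow> 'a \<Rightarrow> bool) \<Rightarrow> 'a set \<Rightarrow> bool" where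
  "has_odd_component E V \<longleftrightarrow> (\<exists>v\<in>V. odd (card (component E V v)))"

function sa :: "('a \<Rightarrow> 'a \<Rightarrow> bool) \<Rightarrow> 'a set \<Rightarrow> int" where
  "sa E V = (if infinite V then 0
             else if V = {} then 1
             else if has_odd_component E V then 0
             else - (\<Sum>V'\<in>{V'. V' \<subset> V}. sa E V'))"
  by auto
termination
  by (relation "measure (\<lambda>(E, V). card V)")
     (auto simp: psubset_card_mono)

definition sa_poly :: "('a \<Rightarrow> 'a \<Rightarrow> bool) \<Rightarrow> 'a set \<Rightarrow> real \<Rightarrow> real" where
  "sa_poly E V t = (\<Sum>V'\<in>Pow V. of_int (sa E V') * t ^ card (V - V'))"

(* complete graph K_n on vertex set {0..<n} *)
definition K_edges :: "nat \<Rightarrow> nat \<Rightarrow> bool" where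
  "K_edges x y \<longleftrightarrow> x \<noteq> y"

definition fps_cosh :: "real fps" where
  "fps_cosh = (fps_exp 1 + fps_exp (-1)) / 2"

definition fps_sech :: "real fps" where
  "fps_sech = inverse fps_cosh"

end

theory Submission imports Defs begin

text \<open>Any two vertices of \<open>K_n\<close> are adjacent, so every induced subgraph of \<open>K_n\<close> is
connected and its signed a-number depends only on its size: \<open>sa(K_V) = a(|V|)\<close>, where
\<open>a(0) = 1\<close>, \<open>a(n) = 0\<close> for odd \<open>n\<close>, and \<open>\<Sum>\<^sub>k C(n,k) a(k) = 0\<close> for even \<open>n > 0\<close>.
Since the Taylor coefficients of \<open>cosh\<close> are the indicator of the even indices, these facts
say exactly that the exponential generating function \<open>A\<close> of \<open>a\<close> satisfies \<open>A cosh = 1\<close>,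
i.e. \<open>A = sech\<close>.  Grouping the subsets in \<open>sa(K_n; t)\<close> by size exhibits \<open>sa(K_n; t)\<close> as
the binomial convolution of \<open>a\<close> with \<open>t\<^sup>n\<close>, whose exponential generating function is
\<open>A e\<^sup>t\<^sup>x\<close>.\<close>

fun sa_complete :: "nat \<Rightarrow> int" where
  "sa_complete n =
     (if n = 0 then 1 else if odd n then 0
      else - (\<Sum>k<n. int (n choose k) * sa_complete k))"

declare sa_complete.simps [simp del]

lemma sa_complete_0 [simp]: "sa_complete 0 = 1"
  by (simp add: sa_complete.simps)

lemma sa_complete_odd: "odd n \<Longrightarrow> sa_complete n = 0"
  by (subst sa_complete.simps) (auto simp: odd_pos)

lemma sum_binomial_sa_complete:
  assumes "even n" "n \<noteq> 0"
  shows "(\<Sum>k\<le>n. int (n choose k) * sa_complete k) = 0"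
proof -
  have "(\<Sum>k\<le>n. int (n choose k) * sa_complete k)
        = sa_complete n + (\<Sum>k<n. int (n choose k) * sa_complete k)"
    by (simp flip: lessThan_Suc_atMost)
  also have "\<dots> = 0"
    using assms by (subst sa_complete.simps) simp
  finally show ?thesis .
qed

lemma reach_K_edges: "x \<in> V \<Longrightarrow> y \<in> V \<Longrightarrow> reach K_edges V x y"
  unfolding reach_def K_edges_def
  by (cases "x = y") (auto intro: r_into_rtranclp)

lemma component_K_edges: "v \<in> V \<Longrightarrow> component K_edges V v = V"
  unfolding component_def using reach_K_edges by auto

lemma has_odd_component_K_edges_iff:
  "has_odd_component K_edges V \<longleftrightarrow> V \<noteq> {} \<and> odd (card V)"
  unfolding has_odd_component_def by (auto simp: component_K_edges)

lemma sum_Pow_card: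
  fixes g :: "nat \<Rightarrow> 'b::comm_semiring_1"
  assumes "finite V"
  shows "(\<Sum>U\<in>Pow V. g (card U)) = (\<Sum>k\<le>card V. of_nat (card V choose k) * g k)"
proof -
  have "(\<Sum>U\<in>Pow V. g (card U)) = (\<Sum>k\<le>card V. \<Sum>U\<in>{U \<in> Pow V. card U = k}. g (card U))"
    by (rule sum.group [symmetric]) (use assms card_mono in auto)
  also have "\<dots> = (\<Sum>k\<le>card V. of_nat (card V choose k) * g k)"
  proof (rule sum.cong [OF refl])
    fix k
    have "{U \<in> Pow V. card U = k} = {U. U \<subseteq> V \<and> card U = k}"
      by auto
    then show "(\<Sum>U\<in>{U \<in> Pow V. card U = k}. g (card U)) = of_nat (card V choose k) * g k"
      using n_subsets [OF assms, of k] by simp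
  qed
  finally show ?thesis .
qed

lemma sum_psubset_card:
  fixes g :: "nat \<Rightarrow> 'b::comm_semiring_1_cancel"
  assumes "finite V"
  shows "(\<Sum>U\<in>{U. U \<subset> V}. g (card U)) = (\<Sum>k<card V. of_nat (card V choose k) * g k)"
proof -
  have "Pow V = insert V {U. U \<subset> V}"
    by auto
  moreover have "finite {U. U \<subset> V}"
    using assms by (auto intro: finite_subset [of _ "Pow V"])
  ultimately have "(\<Sum>U\<in>Pow V. g (card U)) = g (card V) + (\<Sum>U\<in>{U. U \<subset> V}. g (card U))"
    by simp
  moreover have "(\<Sum>k\<le>card V. of_nat (card V choose k) * g k)
                 = g (card V) + (\<Sum>k<card V. of_nat (card V choose k) * g k)"
    by (simp add: add.commute flip: lessThan_Suc_atMost)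
  ultimately show ?thesis
    using sum_Pow_card [OF assms, of g] by simp
qed

lemma sa_K_edges: "finite V \<Longrightarrow> sa K_edges V = sa_complete (card V)"
proof (induction "card V" arbitrary: V rule: less_induct)
  case less
  show ?case
  proof (cases "V = {} \<or> odd (card V)")
    case True
    then show ?thesis
      using less.prems has_odd_component_K_edges_iff [of V] by (auto simp: sa_complete_odd)
  next
    case False
    then have "sa K_edges V = - (\<Sum>U\<in>{U. U \<subset> V}. sa K_edges U)"
      using less.prems has_odd_component_K_edges_iff [of V] by simp
    also have "(\<Sum>U\<in>{U. U \<subset> V}. sa K_edges U) = (\<Sum>U\<in>{U. U \<subset> V}. sa_complete (card U))"
    proof (rule sum.cong [OF refl])
      fix U assume "U \<in> {U. U \<subset> V}"
      then show "sa K_edges U = sa_complete (card U)"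
        using less.hyps less.prems psubset_card_mono finite_subset by blast
    qed
    also have "- \<dots> = sa_complete (card V)"
      using False less.prems by (simp add: sum_psubset_card sa_complete.simps [of "card V"])
    finally show ?thesis .
  qed
qed

lemma sa_poly_K_edges:
  "sa_poly K_edges {0..<n} t = (\<Sum>k\<le>n. of_nat (n choose k) * (of_int (sa_complete k) * t ^ (n - k)))"
proof -
  have "sa_poly K_edges {0..<n} t = (\<Sum>U\<in>Pow {0..<n}. of_int (sa_complete (card U)) * t ^ (n - card U))"
    unfolding sa_poly_def
  proof (rule sum.cong [OF refl])
    fix U assume "U \<in> Pow {0..<n}"
    then have "U \<subseteq> {0..<n}" "finite U"
      using finite_subset by auto
    then show "of_int (sa K_edges U) * t ^ card ({0..<n} - U) = of_int (sa_complete (card U)) * t ^ (n - card U)"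
      by (simp add: sa_K_edges card_Diff_subset del: sa.simps)
  qed
  also have "\<dots> = (\<Sum>k\<le>n. of_nat (n choose k) * (of_int (sa_complete k) * t ^ (n - k)))"
    using sum_Pow_card [of "{0..<n}" "\<lambda>k. of_int (sa_complete k) * t ^ (n - k)"] by simp
  finally show ?thesis .
qed

lemma fps_mult_nth_egf:
  fixes f g :: "nat \<Rightarrow> 'a::field_char_0"
  shows "fps_nth (Abs_fps (\<lambda>n. f n / fact n) * Abs_fps (\<lambda>n. g n / fact n)) n
         = (\<Sum>k\<le>n. of_nat (n choose k) * f k * g (n - k)) / fact n"
  unfolding fps_mult_nth fps_nth_Abs_fps sum_divide_distrib atLeast0AtMost
proof (rule sum.cong [OF refl])
  fix k assume "k \<in> {..n}"
  then have "of_nat (n choose k) = (fact n / (fact k * fact (n - k)) :: 'a)"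
    by (simp add: binomial_fact)
  then show "f k / fact k * (g (n - k) / fact (n - k)) = of_nat (n choose k) * f k * g (n - k) / fact n"
    by (simp add: divide_simps)
qed

lemma fps_exp_egf: "fps_exp t = Abs_fps (\<lambda>n. t ^ n / fact n)"
  by (simp add: fps_eq_iff)

lemma fps_cosh_egf: "fps_cosh = Abs_fps (\<lambda>n. (if even n then 1 else 0) / fact n)"
  by (simp add: fps_eq_iff fps_cosh_def numeral_fps_const)

definition sa_complete_egf :: "real fps" where
  "sa_complete_egf = Abs_fps (\<lambda>n. of_int (sa_complete n) / fact n)"

lemma sa_complete_egf_mult_cosh: "sa_complete_egf * fps_cosh = 1"
proof (rule fps_ext)
  fix n
  have "(\<Sum>k\<le>n. of_nat (n choose k) * of_int (sa_complete k) * (if even (n - k) then 1 else 0))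
        = (if n = 0 then 1 else (0::real))"
  proof (cases "even n \<and> n \<noteq> 0")
    case True
    have "(\<Sum>k\<le>n. of_nat (n choose k) * of_int (sa_complete k) * (if even (n - k) then 1 else 0))
          = (of_int (\<Sum>k\<le>n. int (n choose k) * sa_complete k) :: real)"
      unfolding of_int_sum
    proof (rule sum.cong [OF refl])
      fix k assume "k \<in> {..n}"
      with True show "of_nat (n choose k) * of_int (sa_complete k) * (if even (n - k) then 1 else 0)
                      = (of_int (int (n choose k) * sa_complete k) :: real)"
        by (cases "even k") (auto simp: sa_complete_odd)
    qed
    with True show ?thesis
      by (simp add: sum_binomial_sa_complete)
  next
    case False
    then show ?thesis
      by (cases "n = 0") (auto intro!: sum.neutral simp: sa_complete_odd)
  qed
  then show "fps_nth (sa_complete_egf * fps_cosh) n = fps_nth 1 n"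
    unfolding sa_complete_egf_def fps_cosh_egf fps_mult_nth_egf by simp
qed

lemma fps_sech_eq_sa_complete_egf: "fps_sech = sa_complete_egf"
  unfolding fps_sech_def
  by (metis fps_inverse_unique mult.commute sa_complete_egf_mult_cosh)

theorem mainTheorem3:
  fixes t :: real
  shows "Abs_fps (\<lambda>n. sa_poly K_edges {0..<n} t / fact n) = fps_exp t * fps_sech"
proof -
  have "fps_exp t * fps_sech = sa_complete_egf * Abs_fps (\<lambda>n. t ^ n / fact n)"
    by (simp add: fps_sech_eq_sa_complete_egf fps_exp_egf mult.commute)
  then show ?thesis
    by (simp add: fps_eq_iff sa_complete_egf_def fps_mult_nth_egf sa_poly_K_edges mult.assoc)
qed

end
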